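(* Let $S$ be a nonelementary hyperbolic surface with at least one cusp. Then every vector $u\in T^1S$ whose forward geodesic orbit $\{g_tu: t\ge0\}$ is dense in the nonwandering set $\mathrm{NW}(g_t)$ of the geodesic flow is cusp-recurrent.
   Context: $S=\Gamma\backslash\mathbb H$ with $\Gamma$ a torsion-free Fuchsian group; $g_t$ is the geodesic flow on $T^1S$, and for $u\in T^1S$, $u(t)$ denotes the basepoint of $g_tu$. $\mathrm{NW}(g_t)$ is the set of nonwandering vectors of $g_t$. A closed horocycle in $S$ is the projection of a horocycle in $\mathbb H$ centered at the fixed point of a parabolic element of $\Gamma$. A vector $u\in T^1S$ is cusp-recurrent if the geodesic ray $u(\mathbb R^+)$ does not escape to infinity through a cusp (equivalently, for a lift $\tilde u$, $\tilde u(+\infty)$ is not fixed by a parabolic element of $\Gamma$) and there exist closed horocycles $H_n$ in $S$ with lengths tending to $0$ and times $t_n\ge0$ with $u(t_n)\in H_n$. *)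

theory Defs
  imports "HOL-Analysis.Analysis"
begin

text \<open>The unit tangent bundle of the hyperbolic plane is identified with
PSL(2,R); we work in SL(2,R) (matrices real^2^2 of determinant 1) and represent a
Fuchsian group by its full preimage in SL(2,R), which contains -I.  A matrix h
represents the unit tangent vector whose basepoint is the Moebius image h(i); the
geodesic flow is right multiplication by diag(e^(t/2), e^(-t/2)), so the forward
endpoint of the geodesic determined by h is the boundary point h(infinity), i.e.
the projective point of the first column of h.  T^1S is the quotient of SL(2,R)
by left multiplication by the group; quotient-level notions are expressed on
saturated lifts (the quotient map is open).\<close>

definition mat2 :: "real \<Rightarrow> real \<Rightarrow> real \<Rightarrow> real \<Rightarrow> real^2^2" where
  "mat2 a b c d = (\<chi> i j. if i = 1 then (if j = 1 then a else b) else (if j = 1 then c else d))"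

definition SL2 :: "(real^2^2) set" where
  "SL2 = {m. det m = 1}"

definition mob :: "real^2^2 \<Rightarrow> complex \<Rightarrow> complex" where
  "mob m z = (complex_of_real (m$1$1) * z + complex_of_real (m$1$2)) /
             (complex_of_real (m$2$1) * z + complex_of_real (m$2$2))"

definition mpow :: "real^2^2 \<Rightarrow> nat \<Rightarrow> real^2^2" where
  "mpow g n = (((**) g) ^^ n) (mat 1)"

definition geo_a :: "real \<Rightarrow> real^2^2" where
  "geo_a t = mat2 (exp (t/2)) 0 0 (exp (- t/2))"

definition col1 :: "real^2^2 \<Rightarrow> real^2" where
  "col1 h = (\<chi> i. h$i$1)"

definition torsion_free_fuchsian :: "(real^2^2) set \<Rightarrow> bool" where
  "torsion_free_fuchsian \<Gamma> \<longleftrightarrow>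
     \<Gamma> \<subseteq> SL2 \<and> mat 1 \<in> \<Gamma> \<and> - mat 1 \<in> \<Gamma> \<and>
     (\<forall>g\<in>\<Gamma>. \<forall>h\<in>\<Gamma>. g ** h \<in> \<Gamma>) \<and> (\<forall>g\<in>\<Gamma>. matrix_inv g \<in> \<Gamma>) \<and>
     (\<forall>x. \<not> x islimpt \<Gamma>) \<and>
     (\<forall>g\<in>\<Gamma>. g \<notin> {mat 1, - mat 1} \<longrightarrow> (\<forall>n>0. mpow g n \<notin> {mat 1, - mat 1}))"

text \<open>Elementary: a finite orbit in the closed hyperbolic plane (H together with
its boundary; boundary points = lines through nonzero vectors of R^2).\<close>
definition elementary :: "(real^2^2) set \<Rightarrow> bool" where
  "elementary \<Gamma> \<longleftrightarrow>
     (\<exists>z. Im z > 0 \<and> finite ((\<lambda>g. mob g z) ` \<Gamma>)) \<or>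
     (\<exists>v::real^2. v \<noteq> 0 \<and> finite ((\<lambda>g. {c *\<^sub>R (g *v v) | c. True}) ` \<Gamma>))"

definition parabolic :: "real^2^2 \<Rightarrow> bool" where
  "parabolic g \<longleftrightarrow> g \<in> SL2 \<and> \<bar>g$1$1 + g$2$2\<bar> = 2 \<and> g \<noteq> mat 1 \<and> g \<noteq> - mat 1"

definition fixes_bdry :: "real^2^2 \<Rightarrow> real^2 \<Rightarrow> bool" where
  "fixes_bdry g v \<longleftrightarrow> (\<exists>c. g *v v = c *\<^sub>R v)"

definition parabolic_fixed_point :: "(real^2^2) set \<Rightarrow> real^2 \<Rightarrow> bool" where
  "parabolic_fixed_point \<Gamma> v \<longleftrightarrow> v \<noteq> 0 \<and> (\<exists>p\<in>\<Gamma>. parabolic p \<and> fixes_bdry p v)"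

definition nonwandering :: "(real^2^2) set \<Rightarrow> real^2^2 \<Rightarrow> bool" where
  "nonwandering \<Gamma> h \<longleftrightarrow> h \<in> SL2 \<and>
     (\<forall>U. open U \<and> h \<in> U \<longrightarrow>
        (\<forall>T. \<exists>t>T. \<exists>\<gamma>\<in>\<Gamma>. \<exists>x\<in>U \<inter> SL2. \<gamma> ** x ** geo_a t \<in> U))"

definition fwd_orbit_lift :: "(real^2^2) set \<Rightarrow> real^2^2 \<Rightarrow> (real^2^2) set" where
  "fwd_orbit_lift \<Gamma> h = {\<gamma> ** h ** geo_a t | \<gamma> t. \<gamma> \<in> \<Gamma> \<and> t \<ge> 0}"

text \<open>A horocycle in H centered at the boundary point k(infinity) (first column of k),
namely the orbit of k(i) under k N k^-1.  Every horocycle is of this form.\<close>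
definition horocycle :: "real^2^2 \<Rightarrow> complex set" where
  "horocycle k = {mob (k ** mat2 1 s 0 1) \<i> | s. True}"

definition closed_horocycle_data :: "(real^2^2) set \<Rightarrow> real^2^2 \<Rightarrow> bool" where
  "closed_horocycle_data \<Gamma> k \<longleftrightarrow> k \<in> SL2 \<and> parabolic_fixed_point \<Gamma> (col1 k)"

text \<open>Hyperbolic length of the projected closed horocycle: hyperbolic length of a
fundamental arc of horocycle k for the stabilizer of its center, which is generated
by k n_lambda k^-1 with n_lambda = [[1,lambda],[0,1]] (the arc s in [0,lambda] has
hyperbolic length lambda).\<close>
definition horocycle_length :: "(real^2^2) set \<Rightarrow> real^2^2 \<Rightarrow> real" where
  "horocycle_length \<Gamma> k = Inf {l. l > 0 \<and> k ** mat2 1 l 0 1 ** matrix_inv k \<in> \<Gamma>}"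

definition cusp_recurrent :: "(real^2^2) set \<Rightarrow> real^2^2 \<Rightarrow> bool" where
  "cusp_recurrent \<Gamma> h \<longleftrightarrow>
     \<not> parabolic_fixed_point \<Gamma> (col1 h) \<and>
     (\<exists>K :: nat \<Rightarrow> real^2^2. \<exists>\<tau> :: nat \<Rightarrow> real.
        (\<forall>n. closed_horocycle_data \<Gamma> (K n)) \<and>
        (\<lambda>n. horocycle_length \<Gamma> (K n)) \<longlonglongrightarrow> 0 \<and>
        (\<forall>n. \<tau> n \<ge> 0 \<and> (\<exists>\<gamma>\<in>\<Gamma>. mob (\<gamma> ** h ** geo_a (\<tau> n)) \<i> \<in> horocycle (K n))))"

end

theory Submission
  imports Defs
begin

(* Everything is driven by closed geodesics lying high up in a cusp.  Conjugate so that a cusp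
   sits at infinity with a translation P : z \<mapsto> z + lam in its stabiliser, and pick g0 in the
   group not fixing infinity (non-elementarity), i.e. with lower-left entry c \<noteq> 0.  For large
   m the element P^m g0 is hyperbolic with trace about m lam c, and its axis reaches height
   about |trace| / (1 + c^2); so there are periodic vectors arbitrarily high in the cusp.
   Periodic vectors are nonwandering, hence lie in the closure of the forward orbit of u.

   If u(+oo) were fixed by a parabolic p, the orbit would return, at times tending to
   infinity, arbitrarily close to such a periodic vector; conjugating p back along the ray
   then produces group elements converging to +-I, contradicting discreteness.  Otherwise
   the orbit passes through points at heights y_n -> oo in the cusp, and the horocycle
   centred at the cusp through such a point has length at most lam / y_n. *)

section \<open>Matrices in SL(2,R)\<close>

lemma mat2_nth [simp]:
  "mat2 a b c d $ 1 $ 1 = a" "mat2 a b c d $ 1 $ 2 = b"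
  "mat2 a b c d $ 2 $ 1 = c" "mat2 a b c d $ 2 $ 2 = d"
  by (simp_all add: mat2_def)

lemma mat2_eta: "M = mat2 (M$1$1) (M$1$2) (M$2$1) (M$2$2)"
  by (simp add: mat2_def vec_eq_iff forall_2)

lemma mat2_eq_iff: "mat2 a b c d = mat2 a' b' c' d' \<longleftrightarrow> a = a' \<and> b = b' \<and> c = c' \<and> d = d'"
  by (metis mat2_nth)

lemma matrix_eq_iff_2:
  "(M::real^2^2) = N \<longleftrightarrow> M$1$1 = N$1$1 \<and> M$1$2 = N$1$2 \<and> M$2$1 = N$2$1 \<and> M$2$2 = N$2$2"
  by (metis mat2_eta)

lemma matrix_mult_nth_2: "((M::real^2^2) ** N) $ i $ j = M$i$1 * N$1$j + M$i$2 * N$2$j"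
  by (simp add: matrix_matrix_mult_def sum_2)

lemma mat2_mult:
  "mat2 a b c d ** mat2 e f g h = mat2 (a*e + b*g) (a*f + b*h) (c*e + d*g) (c*f + d*h)"
  by (simp add: mat2_def matrix_matrix_mult_def vec_eq_iff forall_2 sum_2)

lemma mat_1_eq_mat2: "(mat 1 :: real^2^2) = mat2 1 0 0 1"
  by (simp add: mat2_def mat_def vec_eq_iff forall_2)

lemma det_mat2 [simp]: "det (mat2 a b c d) = a*d - b*c"
  by (simp add: det_2)

lemma scaleR_mat2: "r *\<^sub>R mat2 a b c d = mat2 (r*a) (r*b) (r*c) (r*d)"
  by (simp add: mat2_def vec_eq_iff forall_2)

lemma col1_nth [simp]: "col1 k $ i = k $ i $ 1"
  by (simp add: col1_def)

lemma matrix_vector_mult_col1: "(g::real^2^2) *v col1 k = col1 (g ** k)"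
  by (simp add: col1_def matrix_vector_mult_def matrix_matrix_mult_def vec_eq_iff)

lemma SL2_iff_det: "M \<in> SL2 \<longleftrightarrow> det M = 1"
  by (simp add: SL2_def)

definition adj2 :: "real^2^2 \<Rightarrow> real^2^2" where
  "adj2 M = mat2 (M$2$2) (-M$1$2) (-M$2$1) (M$1$1)"

lemma adj2_right: "det M = 1 \<Longrightarrow> M ** adj2 M = mat 1"
  by (subst (1) mat2_eta[of M]) (simp add: adj2_def mat2_mult mat_1_eq_mat2 det_2 mat2_eq_iff algebra_simps)

lemma adj2_left: "det M = 1 \<Longrightarrow> adj2 M ** M = mat 1"
  by (subst (2) mat2_eta[of M]) (simp add: adj2_def mat2_mult mat_1_eq_mat2 det_2 mat2_eq_iff algebra_simps)

lemma matrix_inv_eq_adj2: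
  assumes "det (M::real^2^2) = 1"
  shows "matrix_inv M = adj2 M"
proof -
  have inverse: "M ** adj2 M = mat 1 \<and> adj2 M ** M = mat 1"
    using adj2_left adj2_right assms by blast
  moreover have "A' = adj2 M" if "M ** A' = mat 1 \<and> A' ** M = mat 1" for A'
    by (metis that inverse matrix_mul_assoc matrix_mul_lid matrix_mul_rid)
  ultimately show ?thesis
    unfolding matrix_inv_def by (metis (mono_tags, lifting) someI_ex)
qed

lemma det_adj2 [simp]: "det (adj2 M) = det M"
  by (simp add: adj2_def det_2)

lemma adj2_mult: "adj2 ((A::real^2^2) ** B) = adj2 B ** adj2 A"
  by (simp add: adj2_def mat2_mult matrix_mult_nth_2 mat2_eq_iff algebra_simps)

lemma adj2_adj2 [simp]: "adj2 (adj2 M) = M"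
  by (simp add: adj2_def matrix_eq_iff_2)

lemma mult_adj2_cancel: "det B = 1 \<Longrightarrow> (A::real^2^2) ** B ** adj2 B = A"
  by (metis adj2_right matrix_mul_assoc matrix_mul_rid)

lemma adj2_mult_cancel: "det B = 1 \<Longrightarrow> (A::real^2^2) ** adj2 B ** B = A"
  by (metis adj2_left matrix_mul_assoc matrix_mul_rid)

lemma conj_scalar_mat: "det L = 1 \<Longrightarrow> L ** (e *\<^sub>R mat 1) ** adj2 L = e *\<^sub>R (mat 1 :: real^2^2)"
  by (simp add: matrix_scalar_ac scalar_matrix_assoc[symmetric] adj2_right)

lemma geo_a_add: "geo_a s ** geo_a t = geo_a (s + t)"
  unfolding geo_a_def mat2_mult mat2_eq_iff
  by (simp add: exp_add[symmetric] diff_divide_distrib add_divide_distrib)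

lemma geo_a_0: "geo_a 0 = mat 1"
  by (simp add: geo_a_def mat_1_eq_mat2)

lemma det_geo_a [simp]: "det (geo_a t) = 1"
  by (simp add: geo_a_def exp_add[symmetric])

lemma adj2_geo_a: "adj2 (geo_a t) = geo_a (-t)"
  by (simp add: geo_a_def adj2_def)

lemma geo_a_conj_unipotent:
  "adj2 (geo_a t) ** mat2 e x 0 e ** geo_a t = mat2 e (x * exp (- t)) 0 e"
proof -
  have "exp (- (t / 2)) * exp (- (t / 2)) = exp (- t)" "exp (t / 2) * exp (- (t / 2)) = 1"
    by (simp_all add: exp_add[symmetric])
  then show ?thesis
    unfolding adj2_geo_a by (simp add: geo_a_def mat2_mult mat2_eq_iff algebra_simps)
qed

lemma geo_a_eq_diagonal:
  assumes "0 < \<mu>" "\<mu> * \<nu> = 1"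
  shows "geo_a (- (2 * ln \<mu>)) = mat2 \<nu> 0 0 \<mu>"
proof -
  have "exp (ln \<mu>) = \<mu>" "exp (- ln \<mu>) = \<nu>"
    using assms by (simp_all add: exp_minus field_simps)
  then show ?thesis
    by (simp add: geo_a_def)
qed

lemma tendsto_matrix_mult:
  fixes f :: "'a \<Rightarrow> real^'n^'m" and g :: "'a \<Rightarrow> real^'p^'n"
  assumes "(f \<longlongrightarrow> A) F" "(g \<longlongrightarrow> B) F"
  shows "((\<lambda>x. f x ** g x) \<longlongrightarrow> A ** B) F"
  unfolding matrix_matrix_mult_def
  by (intro vec_tendstoI) (simp add: tendsto_sum tendsto_mult tendsto_vec_nth assms)

lemma tendsto_mat2:
  assumes "(a \<longlongrightarrow> a0) F" "(b \<longlongrightarrow> b0) F" "(c \<longlongrightarrow> c0) F" "(d \<longlongrightarrow> d0) F"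
  shows "((\<lambda>x. mat2 (a x) (b x) (c x) (d x)) \<longlongrightarrow> mat2 a0 b0 c0 d0) F"
  unfolding mat2_def by (intro vec_tendstoI) (simp add: assms)

lemma tendsto_adj2:
  assumes "(f \<longlongrightarrow> (A::real^2^2)) F"
  shows "((\<lambda>x. adj2 (f x)) \<longlongrightarrow> adj2 A) F"
  unfolding adj2_def mat2_def
  by (intro vec_tendstoI) (simp add: tendsto_minus tendsto_vec_nth assms)

lemma continuous_on_matrix_mult_both:
  "continuous_on S (\<lambda>X::real^'p^'n. (A::real^'n^'m) ** X ** (B::real^'q^'p))"
  unfolding continuous_on_def by (intro ballI tendsto_matrix_mult tendsto_ident_at tendsto_const)

section \<open>Torsion-free Fuchsian groups\<close>

locale torsion_free_fuchsian_group =
  fixes \<Gamma> :: "(real^2^2) set"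
  assumes torsion_free_fuchsian: "torsion_free_fuchsian \<Gamma>"
begin

lemma det_eq_1: "g \<in> \<Gamma> \<Longrightarrow> det g = 1"
  using torsion_free_fuchsian unfolding torsion_free_fuchsian_def SL2_def by auto

lemma mult_mem: "g \<in> \<Gamma> \<Longrightarrow> h \<in> \<Gamma> \<Longrightarrow> g ** h \<in> \<Gamma>"
  using torsion_free_fuchsian unfolding torsion_free_fuchsian_def by auto

lemma adj2_mem: "g \<in> \<Gamma> \<Longrightarrow> adj2 g \<in> \<Gamma>"
  using torsion_free_fuchsian det_eq_1 matrix_inv_eq_adj2
  unfolding torsion_free_fuchsian_def by metis

lemma mpow_mem:
  assumes "g \<in> \<Gamma>"
  shows "mpow g n \<in> \<Gamma>"
proof (induction n)
  case 0
  show ?case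
    using torsion_free_fuchsian by (simp add: mpow_def torsion_free_fuchsian_def)
next
  case (Suc n)
  then show ?case
    using assms by (simp add: mpow_def mult_mem)
qed

lemma sign_scaleR_mem:
  assumes "e = 1 \<or> e = -1" "g \<in> \<Gamma>"
  shows "e *\<^sub>R g \<in> \<Gamma>"
proof -
  have "- mat 1 \<in> \<Gamma>"
    using torsion_free_fuchsian unfolding torsion_free_fuchsian_def by auto
  moreover have "(- mat 1) ** g = - g"
    by (simp add: matrix_eq_iff_2 matrix_mult_nth_2 mat_1_eq_mat2)
  ultimately show ?thesis
    using assms mult_mem by fastforce
qed

lemma not_islimpt: "\<not> x islimpt \<Gamma>"
  using torsion_free_fuchsian unfolding torsion_free_fuchsian_def by auto

end

section \<open>Fixed points on the boundary\<close>

lemma fixes_bdry_col1_iff: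
  assumes k: "det k = 1"
  shows "fixes_bdry g (col1 k) \<longleftrightarrow> (adj2 k ** g ** k)$2$1 = 0"
proof -
  have entry: "(adj2 k ** g ** k)$2$1 = k$1$1 * (g *v col1 k)$2 - k$2$1 * (g *v col1 k)$1"
    by (simp add: matrix_mult_nth_2 matrix_vector_mult_def sum_2 adj2_def algebra_simps)
  show ?thesis
  proof
    assume "fixes_bdry g (col1 k)"
    then obtain c where "g *v col1 k = c *\<^sub>R col1 k"
      unfolding fixes_bdry_def by blast
    then show "(adj2 k ** g ** k)$2$1 = 0"
      using entry by simp
  next
    assume "(adj2 k ** g ** k)$2$1 = 0"
    moreover obtain G where G: "G = adj2 k ** g ** k" by blast
    ultimately have G21: "G$2$1 = 0" by simp
    have "g *v col1 k = col1 (k ** G)"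
      unfolding G matrix_vector_mult_col1 using k by (simp add: matrix_mul_assoc adj2_right)
    also have "\<dots> = G$1$1 *\<^sub>R col1 k"
      using G21 by (simp add: vec_eq_iff forall_2 matrix_mult_nth_2)
    finally show "fixes_bdry g (col1 k)"
      unfolding fixes_bdry_def by blast
  qed
qed

lemma parabolic_has_fixed_point:
  assumes "parabolic p"
  obtains v where "v \<noteq> 0" "fixes_bdry p v"
proof -
  define s where "s = (p$1$1 + p$2$2) / 2"
  have "s = 1 \<or> s = -1"
    using assms unfolding parabolic_def s_def by (auto simp: abs_if split: if_splits)
  then have "det (p - s *\<^sub>R mat 1) = det p - 2 * s * s + s * s"
    by (auto simp: det_2 s_def mat_def algebra_simps)
  also have "\<dots> = 0"
    using assms \<open>s = 1 \<or> s = -1\<close> by (auto simp: parabolic_def SL2_def)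
  finally obtain v where "v \<noteq> 0" "(p - s *\<^sub>R mat 1) *v v = 0"
    using det_eq_0_rank matrix_nonfull_linear_equations_eq by fastforce
  moreover from this(2) have "p *v v = s *\<^sub>R v"
    by (simp add: matrix_vector_mult_diff_rdistrib scaleR_matrix_vector_assoc[symmetric])
  ultimately show ?thesis
    using that unfolding fixes_bdry_def by blast
qed

lemma exists_SL2_col1:
  assumes "(v::real^2) \<noteq> 0"
  obtains k where "det k = 1" "col1 k = v"
proof -
  define N where "N = (v$1)^2 + (v$2)^2"
  have "N > 0"
    using assms unfolding N_def by (auto simp: vec_eq_iff forall_2 add_pos_nonneg add_nonneg_pos)
  have "det (mat2 (v$1) (- v$2 / N) (v$2) (v$1 / N)) = ((v$1)^2 + (v$2)^2) / N"
    by (simp add: power2_eq_square add_divide_distrib)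
  also have "\<dots> = 1"
    using \<open>N > 0\<close> by (simp add: N_def[symmetric])
  finally have "det (mat2 (v$1) (- v$2 / N) (v$2) (v$1 / N)) = 1" .
  moreover have "col1 (mat2 (v$1) (- v$2 / N) (v$2) (v$1 / N)) = v"
    by (simp add: vec_eq_iff forall_2)
  ultimately show ?thesis using that by blast
qed

lemma parabolic_conj_upper_unipotent:
  assumes h: "det h = 1" and p: "parabolic p" and fixed: "fixes_bdry p (col1 h)"
  obtains e x where "e = 1 \<or> e = -1" "x \<noteq> 0" "adj2 h ** p ** h = mat2 e x 0 e"
proof -
  let ?X = "adj2 h ** p ** h"
  have X21: "?X$2$1 = 0"
    using fixed fixes_bdry_col1_iff[OF h] by blast
  have "det ?X = 1"
    using h p by (simp add: det_mul parabolic_def SL2_def)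
  then have X11_X22: "?X$1$1 * ?X$2$2 = 1"
    using X21 by (simp add: det_2)
  have "?X$1$1 + ?X$2$2 = (p$1$1 + p$2$2) * det h"
    by (simp add: matrix_mult_nth_2 adj2_def det_2 algebra_simps)
  then have "\<bar>?X$1$1 + ?X$2$2\<bar> = 2"
    using h p by (simp add: parabolic_def)
  then have "(?X$1$1 + ?X$2$2)^2 = 4"
    by (metis power2_abs numeral_Bit0 power2_eq_square mult_2_right)
  moreover have "(?X$1$1 - ?X$2$2)^2 = (?X$1$1 + ?X$2$2)^2 - 4 * (?X$1$1 * ?X$2$2)"
    by (simp add: power2_eq_square algebra_simps)
  ultimately have "(?X$1$1 - ?X$2$2)^2 = 0"
    using X11_X22 by simp
  then have diag: "?X$1$1 = ?X$2$2" by simp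
  define e where "e = ?X$1$1"
  define x where "x = ?X$1$2"
  have X: "?X = mat2 e x 0 e"
    using diag X21 unfolding e_def x_def by (simp add: matrix_eq_iff_2)
  have e: "e = 1 \<or> e = -1"
    using X11_X22 diag unfolding e_def by (simp add: square_eq_1_iff)
  have "x \<noteq> 0"
  proof
    assume "x = 0"
    then have "?X = e *\<^sub>R mat 1"
      using X by (simp add: mat_1_eq_mat2 scaleR_mat2)
    then have "h ** ?X ** adj2 h = e *\<^sub>R mat 1"
      using conj_scalar_mat h by simp
    then have "p = e *\<^sub>R mat 1"
      using h by (simp add: matrix_mul_assoc adj2_right mult_adj2_cancel)
    with e p show False
      by (auto simp: parabolic_def)
  qed
  with e X that show ?thesis by blast
qed

lemma not_elementary_imp_not_fixes_bdry:
  assumes "\<not> elementary \<Gamma>" "(v::real^2) \<noteq> 0"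
  shows "\<exists>g\<in>\<Gamma>. \<not> fixes_bdry g v"
proof (rule ccontr)
  assume "\<not> (\<exists>g\<in>\<Gamma>. \<not> fixes_bdry g v)"
  then have fixed: "\<exists>a. g *v v = a *\<^sub>R v" if "g \<in> \<Gamma>" for g
    using that unfolding fixes_bdry_def by blast
  have lines: "{c *\<^sub>R (a *\<^sub>R v) | c. True} \<in> {{c *\<^sub>R v | c. True}, {0}}" for a :: real
  proof (cases "a = 0")
    case False
    have "{c *\<^sub>R (a *\<^sub>R v) | c. True} = {c *\<^sub>R v | c. True}"
    proof (intro equalityI subsetI)
      fix x assume "x \<in> {c *\<^sub>R (a *\<^sub>R v) | c. True}"
      then show "x \<in> {c *\<^sub>R v | c. True}" by auto
    next
      fix x assume "x \<in> {c *\<^sub>R v | c. True}"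
      then obtain c where "x = (c / a) *\<^sub>R (a *\<^sub>R v)"
        using False by auto
      then show "x \<in> {c *\<^sub>R (a *\<^sub>R v) | c. True}" by blast
    qed
    then show ?thesis by simp
  qed auto
  have "(\<lambda>g. {c *\<^sub>R (g *v v) | c. True}) ` \<Gamma> \<subseteq> {{c *\<^sub>R v | c. True}, {0}}"
  proof
    fix S assume "S \<in> (\<lambda>g. {c *\<^sub>R (g *v v) | c. True}) ` \<Gamma>"
    then obtain g where "g \<in> \<Gamma>" and S: "S = {c *\<^sub>R (g *v v) | c. True}"
      by blast
    then obtain a where "g *v v = a *\<^sub>R v"
      using fixed by blast
    then show "S \<in> {{c *\<^sub>R v | c. True}, {0}}"
      using S lines by simp
  qed
  then have "elementary \<Gamma>"
    unfolding elementary_def using assms(2) finite_subset by blast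
  with assms(1) show False ..
qed

context torsion_free_fuchsian_group
begin

lemma not_tendsto_ray_to_parabolic_fixed_point:
  assumes endpoint: "parabolic_fixed_point \<Gamma> (col1 h)" and h: "det h = 1"
    and \<gamma>: "\<And>n. \<gamma> n \<in> \<Gamma>" and t: "filterlim t at_top sequentially" and L: "det L = 1"
  shows "\<not> (\<lambda>n. \<gamma> n ** h ** geo_a (t n)) \<longlonglongrightarrow> L"
proof
  assume lim: "(\<lambda>n. \<gamma> n ** h ** geo_a (t n)) \<longlonglongrightarrow> L"
  obtain p where pG: "p \<in> \<Gamma>" and p: "parabolic p" and fixed: "fixes_bdry p (col1 h)"
    using endpoint unfolding parabolic_fixed_point_def by blast
  obtain e x where e: "e = 1 \<or> e = -1" and X: "adj2 h ** p ** h = mat2 e x 0 e"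
    using parabolic_conj_upper_unipotent[OF h p fixed] by blast
  define M where "M n = \<gamma> n ** h ** geo_a (t n)" for n
  define q where "q n = e *\<^sub>R (\<gamma> n ** p ** adj2 (\<gamma> n))" for n
  have q_mem: "q n \<in> \<Gamma>" for n
    unfolding q_def using e \<gamma> pG by (intro sign_scaleR_mem mult_mem adj2_mem) auto
  \<comment> \<open>Conjugating p back along the ray scales its translation part by exp (-t), so these
     conjugates of p tend to the scalar matrix e.\<close>
  have "\<gamma> n ** p ** adj2 (\<gamma> n) = M n ** (adj2 (geo_a (t n)) ** (adj2 h ** p ** h) ** geo_a (t n)) ** adj2 (M n)" for n
    unfolding M_def adj2_mult by (simp add: matrix_mul_assoc mult_adj2_cancel det_eq_1 \<gamma> h)
  then have q_eq: "q n = e *\<^sub>R (M n ** mat2 e (x * exp (- t n)) 0 e ** adj2 (M n))" for n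
    unfolding q_def X geo_a_conj_unipotent by simp
  have "(\<lambda>n. exp (- t n)) \<longlonglongrightarrow> 0"
    using filterlim_compose[OF exp_at_bot filterlim_compose[OF filterlim_uminus_at_bot_at_top t]] .
  then have "q \<longlonglongrightarrow> e *\<^sub>R (L ** mat2 e (x * 0) 0 e ** adj2 L)"
    unfolding q_eq M_def
    by (intro tendsto_scaleR tendsto_matrix_mult tendsto_adj2 lim tendsto_mat2 tendsto_intros)
  also have "e *\<^sub>R (L ** mat2 e (x * 0) 0 e ** adj2 L) = mat 1"
    using conj_scalar_mat[OF L, of e] e by (auto simp: mat_1_eq_mat2 scaleR_mat2)
  finally have q_lim: "q \<longlonglongrightarrow> mat 1" .
  have "q n \<noteq> mat 1" for n
  proof
    assume "q n = mat 1"
    then have "\<gamma> n ** p ** adj2 (\<gamma> n) = e *\<^sub>R mat 1"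
      unfolding q_def using e by (auto simp: minus_equation_iff)
    then have "adj2 (\<gamma> n) ** (\<gamma> n ** p ** adj2 (\<gamma> n)) ** \<gamma> n = e *\<^sub>R mat 1"
      using conj_scalar_mat[of "adj2 (\<gamma> n)" e] det_eq_1[OF \<gamma>] by simp
    then have "p = e *\<^sub>R mat 1"
      by (simp add: matrix_mul_assoc adj2_left adj2_mult_cancel det_eq_1 \<gamma>)
    with e p show False
      by (auto simp: parabolic_def)
  qed
  then have "mat 1 islimpt \<Gamma>"
    unfolding islimpt_sequential using q_mem q_lim by blast
  then show False
    using not_islimpt by blast
qed

end

section \<open>Periodic vectors\<close>

definition periodic_vector :: "(real^2^2) set \<Rightarrow> real^2^2 \<Rightarrow> bool" where
  "periodic_vector \<Gamma> h \<longleftrightarrow> h \<in> SL2 \<and> (\<exists>g\<in>\<Gamma>. \<exists>l>0. g ** h ** geo_a l = h)"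

lemma periodic_iterate:
  assumes "g ** h ** geo_a l = h"
  shows "mpow g n ** h ** geo_a (real n * l) = h"
proof (induction n)
  case 0
  then show ?case by (simp add: mpow_def geo_a_0)
next
  case (Suc n)
  have "geo_a (real (Suc n) * l) = geo_a (real n * l) ** geo_a l"
    by (simp add: geo_a_add algebra_simps)
  then have "mpow g (Suc n) ** h ** geo_a (real (Suc n) * l)
      = g ** (mpow g n ** h ** geo_a (real n * l)) ** geo_a l"
    by (simp add: mpow_def matrix_mul_assoc)
  then show ?case
    using Suc assms by (simp add: matrix_mul_assoc)
qed

lemma closure_fwd_orbit_lift_meets_open:
  assumes "x \<in> closure (fwd_orbit_lift \<Gamma> h)" "open V" "x \<in> V"
  shows "\<exists>\<gamma>\<in>\<Gamma>. \<exists>t\<ge>0. \<gamma> ** h ** geo_a t \<in> V"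
proof -
  have "fwd_orbit_lift \<Gamma> h \<inter> V \<noteq> {}"
    using assms unfolding closure_iff_nhds_not_empty by blast
  then show ?thesis
    unfolding fwd_orbit_lift_def by blast
qed

context torsion_free_fuchsian_group
begin

lemma periodic_vector_imp_nonwandering:
  assumes "periodic_vector \<Gamma> h"
  shows "nonwandering \<Gamma> h"
  unfolding nonwandering_def
proof (intro conjI allI impI)
  obtain g l where g: "g \<in> \<Gamma>" and l: "l > 0" and h: "h \<in> SL2" and periodic: "g ** h ** geo_a l = h"
    using assms unfolding periodic_vector_def by blast
  then show "h \<in> SL2" by simp
  fix U :: "(real^2^2) set" and T :: real
  assume U: "open U \<and> h \<in> U"
  obtain n :: nat where "T < real n * l"
    using reals_Archimedean3[OF l] by blast
  moreover have "mpow g n ** h ** geo_a (real n * l) \<in> U"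
    using periodic_iterate[OF periodic] U by simp
  ultimately show "\<exists>t>T. \<exists>\<gamma>\<in>\<Gamma>. \<exists>x\<in>U \<inter> SL2. \<gamma> ** x ** geo_a t \<in> U"
    using mpow_mem[OF g] U h by blast
qed

lemma periodic_vector_limit_of_ray:
  assumes "periodic_vector \<Gamma> h'" and h': "h' \<in> closure (fwd_orbit_lift \<Gamma> h)"
  obtains \<gamma> t where "\<And>n. \<gamma> n \<in> \<Gamma>" "filterlim t at_top sequentially"
    "(\<lambda>n. \<gamma> n ** h ** geo_a (t n)) \<longlonglongrightarrow> h'"
proof -
  obtain g l where g: "g \<in> \<Gamma>" and l: "l > 0" and periodic: "g ** h' ** geo_a l = h'"
    using assms unfolding periodic_vector_def by blast
  have "\<exists>\<gamma> t. \<gamma> \<in> \<Gamma> \<and> t \<ge> 0 \<and>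
      dist (mpow g n ** (\<gamma> ** h ** geo_a t) ** geo_a (real n * l)) h' < inverse (real (Suc n))" for n
  proof -
    define V where "V = {X. dist (mpow g n ** X ** geo_a (real n * l)) h' < inverse (real (Suc n))}"
    have "open V"
      unfolding V_def
      by (intro open_Collect_less continuous_on_dist continuous_on_matrix_mult_both continuous_on_const)
    moreover have "h' \<in> V"
      unfolding V_def using periodic_iterate[OF periodic, of n] by simp
    ultimately show ?thesis
      using closure_fwd_orbit_lift_meets_open[OF h'] unfolding V_def by blast
  qed
  then obtain \<gamma> t where \<gamma>: "\<And>n. \<gamma> n \<in> \<Gamma>" and t: "\<And>n. t n \<ge> 0" and close:
    "\<And>n. dist (mpow g n ** (\<gamma> n ** h ** geo_a (t n)) ** geo_a (real n * l)) h' < inverse (real (Suc n))"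
    by metis
  define \<gamma>' where "\<gamma>' n = mpow g n ** \<gamma> n" for n
  define t' where "t' n = t n + real n * l" for n
  have orbit_eq: "\<gamma>' n ** h ** geo_a (t' n) = mpow g n ** (\<gamma> n ** h ** geo_a (t n)) ** geo_a (real n * l)" for n
    unfolding \<gamma>'_def t'_def geo_a_add[symmetric] by (simp add: matrix_mul_assoc)
  have "\<gamma>' n \<in> \<Gamma>" for n
    unfolding \<gamma>'_def using mpow_mem[OF g] \<gamma> mult_mem by blast
  moreover have "filterlim t' at_top sequentially"
  proof (rule filterlim_at_top_mono)
    show "filterlim (\<lambda>n. l * real n) at_top sequentially"
      using filterlim_tendsto_pos_mult_at_top[OF tendsto_const l filterlim_real_sequentially] .
    show "\<forall>\<^sub>F n in sequentially. l * real n \<le> t' n"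
      unfolding t'_def using t by (simp add: mult.commute add_increasing)
  qed
  moreover have "(\<lambda>n. \<gamma>' n ** h ** geo_a (t' n)) \<longlonglongrightarrow> h'"
  proof (rule tendsto_dist_iff[THEN iffD2],
      rule tendsto_sandwich[where f = "\<lambda>_. 0" and h = "\<lambda>n. inverse (real (Suc n))"])
    show "\<forall>\<^sub>F n in sequentially. dist (\<gamma>' n ** h ** geo_a (t' n)) h' \<le> inverse (real (Suc n))"
      using close by (simp add: orbit_eq less_imp_le)
  qed (use LIMSEQ_inverse_real_of_nat in auto)
  ultimately show ?thesis using that by blast
qed

lemma not_parabolic_endpoint_if_periodic_in_orbit_closure:
  assumes "periodic_vector \<Gamma> h'" "h' \<in> closure (fwd_orbit_lift \<Gamma> h)" "h \<in> SL2"
  shows "\<not> parabolic_fixed_point \<Gamma> (col1 h)"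
proof
  assume "parabolic_fixed_point \<Gamma> (col1 h)"
  moreover obtain \<gamma> t where "\<And>n. \<gamma> n \<in> \<Gamma>" "filterlim t at_top sequentially"
    "(\<lambda>n. \<gamma> n ** h ** geo_a (t n)) \<longlonglongrightarrow> h'"
    using periodic_vector_limit_of_ray[OF assms(1,2)] by blast
  moreover have "det h = 1" "det h' = 1"
    using assms(1,3) by (simp_all add: periodic_vector_def SL2_iff_det)
  ultimately show False
    using not_tendsto_ray_to_parabolic_fixed_point by blast
qed

end

section \<open>Cusp frames and heights in the cusp\<close>

(* k(oo) is a cusp and, in the coordinates given by k, its stabiliser contains z \<mapsto> z + lam. *)
definition cusp_frame :: "(real^2^2) set \<Rightarrow> real^2^2 \<Rightarrow> real \<Rightarrow> bool" where
  "cusp_frame \<Gamma> k lam \<longleftrightarrow>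
     closed_horocycle_data \<Gamma> k \<and> lam > 0 \<and> k ** mat2 1 lam 0 1 ** adj2 k \<in> \<Gamma>"

context torsion_free_fuchsian_group
begin

lemma exists_cusp_frame:
  assumes "p \<in> \<Gamma>" "parabolic p"
  obtains k lam where "cusp_frame \<Gamma> k lam"
proof -
  obtain v where "v \<noteq> 0" "fixes_bdry p v"
    using parabolic_has_fixed_point[OF assms(2)] by blast
  moreover obtain k where k: "det k = 1" "col1 k = v"
    using exists_SL2_col1[OF \<open>v \<noteq> 0\<close>] by blast
  ultimately have data: "closed_horocycle_data \<Gamma> k"
    using assms unfolding closed_horocycle_data_def parabolic_fixed_point_def SL2_iff_det by blast
  obtain e x where e: "e = 1 \<or> e = -1" and "x \<noteq> 0" and X: "adj2 k ** p ** k = mat2 e x 0 e"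
    using parabolic_conj_upper_unipotent[OF k(1) assms(2)] \<open>fixes_bdry p v\<close> k(2) by blast
  have conj: "k ** (adj2 k ** g ** k) ** adj2 k = g" for g
    using k(1) by (simp add: matrix_mul_assoc adj2_right mult_adj2_cancel)
  have "adj2 k ** (e *\<^sub>R p) ** k = mat2 1 (e * x) 0 1"
    using X e by (auto simp: matrix_scalar_ac scalar_matrix_assoc[symmetric] scaleR_mat2)
  then have translation: "k ** mat2 1 (e * x) 0 1 ** adj2 k \<in> \<Gamma>"
    using conj sign_scaleR_mem[OF e assms(1)] by metis
  have "adj2 (k ** mat2 1 (e * x) 0 1 ** adj2 k) = k ** mat2 1 (- (e * x)) 0 1 ** adj2 k"
    by (simp add: adj2_mult matrix_mul_assoc) (simp add: adj2_def)
  then have inverse_translation: "k ** mat2 1 (- (e * x)) 0 1 ** adj2 k \<in> \<Gamma>"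
    using adj2_mem[OF translation] by simp
  have "e * x \<noteq> 0"
    using \<open>x \<noteq> 0\<close> e by auto
  then consider "e * x < 0" | "0 < e * x"
    by linarith
  then show ?thesis
  proof cases
    case 1
    then have "cusp_frame \<Gamma> k (- (e * x))"
      using data inverse_translation by (simp add: cusp_frame_def)
    then show ?thesis using that by blast
  next
    case 2
    then have "cusp_frame \<Gamma> k (e * x)"
      using data translation by (simp add: cusp_frame_def)
    then show ?thesis using that by blast
  qed
qed

end

lemma mpow_conj_translation:
  assumes k: "det k = 1"
  shows "mpow (k ** mat2 1 lam 0 1 ** adj2 k) m = k ** mat2 1 (real m * lam) 0 1 ** adj2 k"
proof (induction m)
  case 0
  show ?case
    using k by (simp add: mpow_def mat_1_eq_mat2[symmetric] adj2_right)
next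
  case (Suc m)
  have "mpow (k ** mat2 1 lam 0 1 ** adj2 k) (Suc m)
      = k ** mat2 1 lam 0 1 ** (adj2 k ** k) ** mat2 1 (real m * lam) 0 1 ** adj2 k"
    using Suc by (simp add: mpow_def matrix_mul_assoc)
  also have "\<dots> = k ** (mat2 1 lam 0 1 ** mat2 1 (real m * lam) 0 1) ** adj2 k"
    using k by (simp add: adj2_left matrix_mul_assoc)
  also have "\<dots> = k ** mat2 1 (real (Suc m) * lam) 0 1 ** adj2 k"
    by (simp add: mat2_mult algebra_simps)
  finally show ?case .
qed

lemma cusp_frame_rescale:
  assumes frame: "cusp_frame \<Gamma> k lam" and "a > 0"
  shows "cusp_frame \<Gamma> (k ** mat2 a 0 0 (1 / a)) (lam / a^2)"
proof -
  let ?K = "k ** mat2 a 0 0 (1 / a)"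
  have k: "det k = 1"
    using frame unfolding cusp_frame_def closed_horocycle_data_def SL2_iff_det by blast
  have K: "det ?K = 1"
    using k \<open>a > 0\<close> by (simp add: det_mul)
  have "col1 ?K = a *\<^sub>R col1 k"
    by (simp add: vec_eq_iff forall_2 matrix_mult_nth_2)
  moreover have "parabolic_fixed_point \<Gamma> (col1 k)"
    using frame unfolding cusp_frame_def closed_horocycle_data_def by blast
  ultimately have "parabolic_fixed_point \<Gamma> (col1 ?K)"
    using \<open>a > 0\<close> unfolding parabolic_fixed_point_def fixes_bdry_def
    by (auto simp: matrix_vector_mult_scaleR)
  then have "closed_horocycle_data \<Gamma> ?K"
    using K unfolding closed_horocycle_data_def SL2_iff_det by blast
  moreover have "?K ** mat2 1 (lam / a^2) 0 1 ** adj2 ?K = k ** mat2 1 lam 0 1 ** adj2 k"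
  proof -
    have "?K ** mat2 1 (lam / a^2) 0 1 ** adj2 ?K
        = k ** (mat2 a 0 0 (1 / a) ** mat2 1 (lam / a^2) 0 1 ** adj2 (mat2 a 0 0 (1 / a))) ** adj2 k"
      by (simp add: adj2_mult matrix_mul_assoc)
    also have "mat2 a 0 0 (1 / a) ** mat2 1 (lam / a^2) 0 1 ** adj2 (mat2 a 0 0 (1 / a)) = mat2 1 lam 0 1"
      using \<open>a > 0\<close> by (simp add: adj2_def mat2_mult power2_eq_square)
    finally show ?thesis .
  qed
  ultimately show ?thesis
    using frame \<open>a > 0\<close> unfolding cusp_frame_def by simp
qed

lemma horocycle_length_bounds:
  assumes "cusp_frame \<Gamma> k lam"
  shows "0 \<le> horocycle_length \<Gamma> k" "horocycle_length \<Gamma> k \<le> lam"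
proof -
  define L where "L = {l. l > 0 \<and> k ** mat2 1 l 0 1 ** matrix_inv k \<in> \<Gamma>}"
  have "det k = 1"
    using assms unfolding cusp_frame_def closed_horocycle_data_def SL2_iff_det by blast
  then have "lam \<in> L"
    using assms unfolding L_def cusp_frame_def by (simp add: matrix_inv_eq_adj2)
  moreover have "bdd_below L"
    unfolding L_def by (rule bdd_belowI[of _ 0]) auto
  ultimately show "0 \<le> horocycle_length \<Gamma> k" "horocycle_length \<Gamma> k \<le> lam"
    unfolding horocycle_length_def L_def[symmetric]
    by (auto intro: cInf_lower cInf_greatest simp: L_def)
qed

lemma horocycle_length_tendsto_0:
  assumes frames: "\<And>n. cusp_frame \<Gamma> (K n) (lam / y n)"
    and y: "\<And>n. real (Suc n) < y n" and "lam > 0"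
  shows "(\<lambda>n. horocycle_length \<Gamma> (K n)) \<longlonglongrightarrow> 0"
proof (rule tendsto_sandwich[where f = "\<lambda>_. 0" and h = "\<lambda>n. lam * inverse (real (Suc n))"])
  have "lam / y n \<le> lam * inverse (real (Suc n))" for n
  proof -
    have "lam * real (Suc n) \<le> lam * y n"
      using y[of n] \<open>lam > 0\<close> by (intro mult_left_mono) auto
    moreover have "0 < y n"
      using y[of n] of_nat_0_le_iff[of "Suc n"] by linarith
    ultimately show ?thesis
      by (simp add: field_simps)
  qed
  then show "\<forall>\<^sub>F n in sequentially. horocycle_length \<Gamma> (K n) \<le> lam * inverse (real (Suc n))"
    by (intro always_eventually allI order_trans[OF horocycle_length_bounds(2)[OF frames]])
  show "\<forall>\<^sub>F n in sequentially. 0 \<le> horocycle_length \<Gamma> (K n)"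
    by (intro always_eventually allI horocycle_length_bounds(1)[OF frames])
  show "(\<lambda>n. lam * inverse (real (Suc n))) \<longlonglongrightarrow> 0"
    using tendsto_mult_right_zero[OF LIMSEQ_inverse_real_of_nat] .
qed simp

(* For X in SL(2,R), Im X(i) = 1 / bottom_row_sq X; so a small bottom_row_sq (adj2 k ** X)
   means that the basepoint of X is high up in the cusp at k(oo). *)
definition bottom_row_sq :: "real^2^2 \<Rightarrow> real" where
  "bottom_row_sq X = (X$2$1)^2 + (X$2$2)^2"

lemma bottom_row_sq_pos: "det N = 1 \<Longrightarrow> 0 < bottom_row_sq N"
  unfolding bottom_row_sq_def
  by (cases "N$2$1 = 0") (auto simp: det_2 add_pos_nonneg)

lemma Im_mob_i: "det N = 1 \<Longrightarrow> Im (mob N \<i>) = 1 / bottom_row_sq N"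
  by (simp add: mob_def bottom_row_sq_def Im_divide det_2 power2_eq_square algebra_simps)

lemma continuous_on_bottom_row_sq_mult: "continuous_on S (\<lambda>X. bottom_row_sq (A ** X))"
  unfolding continuous_on_def bottom_row_sq_def
  by (intro ballI tendsto_intros tendsto_matrix_mult tendsto_ident_at)

lemma mob_mult:
  assumes "complex_of_real (B$2$1) * z + complex_of_real (B$2$2) \<noteq> 0"
  shows "mob (A ** B) z = mob A (mob B z)"
proof -
  define w where "w = complex_of_real (B$2$1) * z + complex_of_real (B$2$2)"
  define u where "u = complex_of_real (B$1$1) * z + complex_of_real (B$1$2)"
  have "mob (A ** B) z
      = (of_real (A$1$1) * u + of_real (A$1$2) * w) / (of_real (A$2$1) * u + of_real (A$2$2) * w)"
    unfolding mob_def matrix_mult_nth_2 u_def w_def by (simp add: algebra_simps)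
  also have "\<dots> = ((of_real (A$1$1) * u + of_real (A$1$2) * w) / w)
                / ((of_real (A$2$1) * u + of_real (A$2$2) * w) / w)"
    using assms unfolding w_def by simp
  also have "\<dots> = mob A (u / w)"
    unfolding mob_def using assms unfolding w_def by (simp add: add_divide_distrib)
  finally show ?thesis
    unfolding mob_def u_def w_def .
qed

lemma mob_i_mem_horocycle_rescaled:
  assumes k: "det k = 1" and M: "det M = 1" and y: "y = Im (mob (adj2 k ** M) \<i>)"
  shows "mob M \<i> \<in> horocycle (k ** mat2 (sqrt y) 0 0 (1 / sqrt y))"
proof -
  define N where "N = adj2 k ** M"
  define z where "z = mob N \<i>"
  define s where "s = Re z / y"
  have N: "det N = 1"
    unfolding N_def using k M by (simp add: det_mul)
  have "y > 0"
    unfolding y Im_mob_i[OF N[unfolded N_def]] using bottom_row_sq_pos[OF N] N_def by simp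
  have "mob M \<i> = mob k z"
    unfolding z_def N_def using N k
    by (subst mob_mult[symmetric]) (auto simp: complex_eq_iff det_2 N_def matrix_mul_assoc adj2_right)
  also have "\<dots> = mob k (mob (mat2 (sqrt y) (sqrt y * s) 0 (1 / sqrt y)) \<i>)"
  proof -
    have "complex_of_real (sqrt y) * complex_of_real (sqrt y) = complex_of_real y"
      using \<open>y > 0\<close> by (simp flip: of_real_mult)
    then have "mob (mat2 (sqrt y) (sqrt y * s) 0 (1 / sqrt y)) \<i> = complex_of_real y * (\<i> + complex_of_real s)"
      unfolding mob_def using \<open>y > 0\<close> by (simp add: field_simps)
    also have "\<dots> = z"
      unfolding s_def using \<open>y > 0\<close> by (simp add: complex_eq_iff y z_def N_def)
    finally show ?thesis by simp
  qed
  also have "\<dots> = mob (k ** mat2 (sqrt y) 0 0 (1 / sqrt y) ** mat2 1 s 0 1) \<i>"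
    using \<open>y > 0\<close> by (simp add: mob_mult complex_eq_iff matrix_mul_assoc[symmetric] mat2_mult)
  finally show ?thesis
    unfolding horocycle_def by blast
qed

section \<open>Closed geodesics high in the cusp\<close>

lemma mat2_conj_diagonal:
  fixes \<alpha> \<beta> c d \<sigma> \<mu> \<nu> :: real
  assumes c: "c \<noteq> 0" and det: "\<alpha> * d - \<beta> * c = 1" and \<sigma>: "\<sigma> = 1 \<or> \<sigma> = -1"
    and \<mu>\<nu>: "\<mu> * \<nu> = 1" and trace: "\<sigma> * (\<alpha> + d) = \<mu> + \<nu>" and "\<nu> < \<mu>"
  defines "r \<equiv> sqrt (\<mu> - \<nu>)"
  defines "H \<equiv> mat2 ((\<sigma>*\<nu> - d) / (c*r)) (- \<sigma> * (\<sigma>*\<mu> - d) / r) (1/r) (- \<sigma> * c / r)"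
  shows "det H = 1" "mat2 \<alpha> \<beta> c d ** H = \<sigma> *\<^sub>R (H ** mat2 \<nu> 0 0 \<mu>)"
proof -
  have r: "r > 0" "r * r = \<mu> - \<nu>"
    using \<open>\<nu> < \<mu>\<close> unfolding r_def by auto
  have \<sigma>\<sigma>: "\<sigma> * \<sigma> = 1"
    using \<sigma> by auto
  \<comment> \<open>\<open>\<sigma>\<mu>\<close> and \<open>\<sigma>\<nu>\<close> are the eigenvalues, with eigenvectors \<open>(\<sigma>x - d, c)\<close>.\<close>
  have eigen: "\<alpha> * (\<sigma>*x - d) + \<beta> * c = \<sigma>*x * (\<sigma>*x - d)" if "x = \<mu> \<or> x = \<nu>" for x
  proof -
    have "\<alpha> * (\<sigma>*x - d) + \<beta> * c - \<sigma>*x * (\<sigma>*x - d)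
        = \<sigma>*x*(\<alpha> + d) - (\<sigma>*\<sigma>)*x*x - (\<alpha> * d - \<beta> * c)"
      by (simp add: algebra_simps)
    also have "\<dots> = x * (\<sigma> * (\<alpha> + d)) - x * x - 1"
      using \<sigma>\<sigma> det by (simp add: algebra_simps)
    also have "\<dots> = 0"
      using that \<mu>\<nu> unfolding trace by (auto simp: algebra_simps)
    finally show ?thesis by simp
  qed
  have "det H = (- \<sigma> * (\<sigma> * \<nu> - d) + \<sigma> * (\<sigma>*\<mu> - d)) / (r * r)"
    unfolding H_def using c r by (simp add: field_simps)
  also have "\<dots> = 1"
    using r \<sigma>\<sigma> \<open>\<nu> < \<mu>\<close> by (simp add: algebra_simps)
  finally show "det H = 1" .
  show "mat2 \<alpha> \<beta> c d ** H = \<sigma> *\<^sub>R (H ** mat2 \<nu> 0 0 \<mu>)"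
    unfolding H_def mat2_mult scaleR_mat2 mat2_eq_iff
  proof (intro conjI)
    show "\<alpha> * ((\<sigma> * \<nu> - d) / (c * r)) + \<beta> * (1 / r)
        = \<sigma> * ((\<sigma> * \<nu> - d) / (c * r) * \<nu> + - \<sigma> * (\<sigma> * \<mu> - d) / r * 0)"
      using eigen[of \<nu>] c r by (simp add: field_simps)
    have "\<alpha> * (- \<sigma> * (\<sigma> * \<mu> - d) / r) + \<beta> * (- \<sigma> * c / r)
        = - \<sigma> / r * (\<alpha> * (\<sigma>*\<mu> - d) + \<beta> * c)"
      using r by (simp add: field_simps)
    also have "\<dots> = - \<sigma> / r * (\<sigma>*\<mu> * (\<sigma>*\<mu> - d))"
      using eigen[of \<mu>] by simp
    also have "\<dots> = \<sigma> * ((\<sigma> * \<nu> - d) / (c * r) * 0 + - \<sigma> * (\<sigma> * \<mu> - d) / r * \<mu>)"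
      using r c by (simp add: field_simps)
    finally show "\<alpha> * (- \<sigma> * (\<sigma> * \<mu> - d) / r) + \<beta> * (- \<sigma> * c / r)
        = \<sigma> * ((\<sigma> * \<nu> - d) / (c * r) * 0 + - \<sigma> * (\<sigma> * \<mu> - d) / r * \<mu>)" .
  qed (use c r \<sigma>\<sigma> in \<open>simp_all add: field_simps\<close>)
qed

lemma hyperbolic_eigenvalues:
  assumes T: "2 < \<bar>T\<bar>"
  obtains \<mu> \<nu> :: real
  where "\<mu> * \<nu> = 1" "\<mu> + \<nu> = \<bar>T\<bar>" "1 < \<mu>" "\<nu> < \<mu>" "\<mu> - \<nu> = sqrt (T^2 - 4)"
proof -
  define S where "S = sqrt (T^2 - 4)"
  define \<mu> where "\<mu> = (\<bar>T\<bar> + S) / 2"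
  define \<nu> where "\<nu> = (\<bar>T\<bar> - S) / 2"
  have "4 < T^2"
    using T mult_strict_mono[OF T T] by (simp add: power2_eq_square)
  then have S: "S > 0" "S * S = T^2 - 4"
    unfolding S_def by auto
  have "\<mu> * \<nu> = (\<bar>T\<bar> * \<bar>T\<bar> - S * S) / 4"
    unfolding \<mu>_def \<nu>_def by (simp add: algebra_simps)
  then have "\<mu> * \<nu> = 1"
    using S by (simp add: power2_eq_square)
  moreover have "\<mu> + \<nu> = \<bar>T\<bar>" "1 < \<mu>" "\<nu> < \<mu>" "\<mu> - \<nu> = S"
    using T S(1) unfolding \<mu>_def \<nu>_def by (simp_all add: field_simps)
  ultimately show ?thesis
    using that unfolding S_def by blast
qed

lemma mat2_hyperbolic_periodic:
  assumes det: "\<alpha> * d - \<beta> * c = 1" and c: "c \<noteq> 0" and trace: "2 < \<bar>\<alpha> + d\<bar>"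
  obtains H l \<sigma> where "det H = 1" "l > 0" "\<sigma> = 1 \<or> \<sigma> = -1"
    "mat2 \<alpha> \<beta> c d ** H ** geo_a l = \<sigma> *\<^sub>R H"
    "bottom_row_sq H = (1 + c^2) / sqrt ((\<alpha> + d)^2 - 4)"
proof -
  obtain \<mu> \<nu> where \<mu>\<nu>: "\<mu> * \<nu> = 1" and "\<mu> + \<nu> = \<bar>\<alpha> + d\<bar>" "1 < \<mu>" "\<nu> < \<mu>"
    and S: "\<mu> - \<nu> = sqrt ((\<alpha> + d)^2 - 4)"
    using hyperbolic_eigenvalues[OF trace] by blast
  define \<sigma> :: real where "\<sigma> = sgn (\<alpha> + d)"
  define S where "S = sqrt ((\<alpha> + d)^2 - 4)"
  have \<sigma>: "\<sigma> = 1 \<or> \<sigma> = -1" "\<sigma> * (\<alpha> + d) = \<mu> + \<nu>"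
    using trace \<open>\<mu> + \<nu> = \<bar>\<alpha> + d\<bar>\<close> unfolding \<sigma>_def by (auto simp: sgn_if)
  have "S > 0"
    using \<open>\<nu> < \<mu>\<close> unfolding S_def S[symmetric] by simp
  define H where "H = mat2 ((\<sigma>*\<nu> - d) / (c * sqrt S)) (- \<sigma> * (\<sigma>*\<mu> - d) / sqrt S)
                      (1 / sqrt S) (- \<sigma> * c / sqrt S)"
  have H: "det H = 1" "mat2 \<alpha> \<beta> c d ** H = \<sigma> *\<^sub>R (H ** mat2 \<nu> 0 0 \<mu>)"
    using mat2_conj_diagonal[OF c det \<sigma>(1) \<mu>\<nu> \<sigma>(2) \<open>\<nu> < \<mu>\<close>] unfolding H_def S_def S by blast+
  define l where "l = 2 * ln \<mu>"
  have "mat2 \<alpha> \<beta> c d ** H ** geo_a l = \<sigma> *\<^sub>R (H ** (geo_a (- l) ** geo_a l))"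
    using H(2) geo_a_eq_diagonal[OF _ \<mu>\<nu>] \<open>1 < \<mu>\<close> unfolding l_def
    by (simp add: scalar_matrix_assoc[symmetric] matrix_mul_assoc)
  then have "mat2 \<alpha> \<beta> c d ** H ** geo_a l = \<sigma> *\<^sub>R H"
    by (simp add: geo_a_add geo_a_0)
  moreover have "l > 0"
    unfolding l_def using \<open>1 < \<mu>\<close> by simp
  moreover have "bottom_row_sq H = (1 + c^2) / S"
  proof -
    have "(sqrt S)^2 = S" "\<sigma>^2 = 1"
      using \<open>S > 0\<close> \<sigma>(1) by auto
    then show ?thesis
      unfolding H_def bottom_row_sq_def by (simp add: power_divide power_mult_distrib add_divide_distrib)
  qed
  ultimately show ?thesis
    using that H(1) \<sigma>(1) unfolding S_def by blast
qed

lemma exists_translate_large_trace: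
  assumes "c \<noteq> 0" "lam > 0"
  obtains m :: nat where "B < \<bar>a + real m * lam * c + d\<bar>"
proof -
  obtain m :: nat where m: "\<bar>a + d\<bar> + B < real m * (lam * \<bar>c\<bar>)"
    using reals_Archimedean3[of "lam * \<bar>c\<bar>"] assms by auto
  have "\<bar>real m * lam * c\<bar> = real m * (lam * \<bar>c\<bar>)"
    using assms by (simp add: abs_mult)
  then have "B < \<bar>a + real m * lam * c + d\<bar>"
    using m by linarith
  then show ?thesis using that by blast
qed

lemma bottom_row_bound_of_trace:
  assumes "0 < r" "2 + (1 + c^2) / r < \<bar>T\<bar>"
  shows "(1 + c^2) / sqrt (T^2 - 4) < r"
proof -
  define Y where "Y = (1 + c^2) / r"
  have "0 < Y"
    using assms(1) unfolding Y_def by (simp add: add_pos_nonneg)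
  have "(2 + Y)^2 < \<bar>T\<bar>^2"
    using \<open>0 < Y\<close> assms(2) unfolding Y_def by (intro power_strict_mono) auto
  then have "Y^2 < T^2 - 4"
    using \<open>0 < Y\<close> by (simp add: power2_eq_square algebra_simps)
  then have "Y < sqrt (T^2 - 4)"
    by (rule real_less_rsqrt)
  with \<open>0 < Y\<close> have "0 < sqrt (T^2 - 4)" "1 + c^2 < r * sqrt (T^2 - 4)"
    using assms(1) unfolding Y_def by (linarith, simp add: pos_divide_less_eq mult.commute)
  then show ?thesis
    by (simp add: pos_divide_less_eq)
qed

lemma conj_periodic:
  assumes "g ** k = k ** A" "A ** H ** geo_a l = \<sigma> *\<^sub>R H" "\<sigma> = 1 \<or> \<sigma> = -1"
  shows "(\<sigma> *\<^sub>R g) ** (k ** H) ** geo_a l = k ** H"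
proof -
  have "(\<sigma> *\<^sub>R g) ** (k ** H) ** geo_a l = \<sigma> *\<^sub>R (k ** (A ** H ** geo_a l))"
    using assms(1) by (simp add: scalar_matrix_assoc[symmetric] matrix_mul_assoc)
  also have "\<dots> = (\<sigma> * \<sigma>) *\<^sub>R (k ** H)"
    unfolding assms(2) by (simp add: matrix_scalar_ac scalar_matrix_assoc[symmetric])
  finally show ?thesis
    using assms(3) by auto
qed

context torsion_free_fuchsian_group
begin

lemma exists_periodic_vector_deep_in_cusp:
  assumes frame: "cusp_frame \<Gamma> k lam" and g0: "g0 \<in> \<Gamma>" "\<not> fixes_bdry g0 (col1 k)" and "r > 0"
  obtains h' where "periodic_vector \<Gamma> h'" "bottom_row_sq (adj2 k ** h') < r"
proof -
  let ?P = "k ** mat2 1 lam 0 1 ** adj2 k"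
  have k: "det k = 1" and "lam > 0" and P: "?P \<in> \<Gamma>"
    using frame unfolding cusp_frame_def closed_horocycle_data_def SL2_iff_det by auto
  obtain a b c d where G: "adj2 k ** g0 ** k = mat2 a b c d"
    using mat2_eta by metis
  have "c \<noteq> 0"
    using g0(2) fixes_bdry_col1_iff[OF k] G by simp
  have "det (adj2 k ** g0 ** k) = 1"
    using k det_eq_1[OF g0(1)] by (simp add: det_mul)
  then have det: "(a + real m * lam * c) * d - (b + real m * lam * d) * c = 1" for m
    using G by (simp add: algebra_simps)
  obtain m where m: "2 + (1 + c^2) / r < \<bar>(a + real m * lam * c) + d\<bar>"
    using exists_translate_large_trace[OF \<open>c \<noteq> 0\<close> \<open>lam > 0\<close>] by blast
  have "0 \<le> (1 + c^2) / r"
    using \<open>r > 0\<close> by simp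
  then have "2 < \<bar>a + real m * lam * c + d\<bar>"
    using m by linarith
  then obtain H l \<sigma> where H: "det H = 1" "l > 0" "\<sigma> = 1 \<or> \<sigma> = -1"
    and periodic: "mat2 (a + real m * lam * c) (b + real m * lam * d) c d ** H ** geo_a l = \<sigma> *\<^sub>R H"
    and bottom: "bottom_row_sq H = (1 + c^2) / sqrt ((a + real m * lam * c + d)^2 - 4)"
    using mat2_hyperbolic_periodic[OF det \<open>c \<noteq> 0\<close>] by blast
  have "mpow ?P m ** g0 ** k = k ** (mat2 1 (real m * lam) 0 1 ** (adj2 k ** g0 ** k))"
    unfolding mpow_conj_translation[OF k] by (simp add: matrix_mul_assoc)
  also have "\<dots> = k ** mat2 (a + real m * lam * c) (b + real m * lam * d) c d"
    unfolding G by (simp add: mat2_mult algebra_simps)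
  finally have "(\<sigma> *\<^sub>R (mpow ?P m ** g0)) ** (k ** H) ** geo_a l = k ** H"
    using conj_periodic periodic H(3) by blast
  moreover have "\<sigma> *\<^sub>R (mpow ?P m ** g0) \<in> \<Gamma>"
    by (intro sign_scaleR_mem[OF H(3)] mult_mem[OF mpow_mem[OF P] g0(1)])
  moreover have "det (k ** H) = 1"
    using k H(1) by (simp add: det_mul)
  moreover have "bottom_row_sq (adj2 k ** (k ** H)) < r"
    using bottom_row_bound_of_trace[OF \<open>r > 0\<close> m] k bottom by (simp add: matrix_mul_assoc adj2_left)
  ultimately show ?thesis
    using that H(2) unfolding periodic_vector_def SL2_iff_det by blast
qed

lemma exists_shrinking_horocycles_along_orbit:
  assumes frame: "cusp_frame \<Gamma> k lam" and h: "h \<in> SL2"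
    and deep: "\<And>r. r > 0 \<Longrightarrow> \<exists>x \<in> closure (fwd_orbit_lift \<Gamma> h). bottom_row_sq (adj2 k ** x) < r"
  shows "\<exists>K \<tau>. (\<forall>n. closed_horocycle_data \<Gamma> (K n)) \<and>
           (\<lambda>n. horocycle_length \<Gamma> (K n)) \<longlonglongrightarrow> 0 \<and>
           (\<forall>n. \<tau> n \<ge> 0 \<and> (\<exists>\<gamma>\<in>\<Gamma>. mob (\<gamma> ** h ** geo_a (\<tau> n)) \<i> \<in> horocycle (K n)))"
proof -
  have "\<exists>\<gamma>\<in>\<Gamma>. \<exists>\<tau>\<ge>0. bottom_row_sq (adj2 k ** (\<gamma> ** h ** geo_a \<tau>)) < inverse (real (Suc n))" for n
  proof -
    obtain x where "x \<in> closure (fwd_orbit_lift \<Gamma> h)" "bottom_row_sq (adj2 k ** x) < inverse (real (Suc n))"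
      using deep[of "inverse (real (Suc n))"] by auto
    then show ?thesis
      using closure_fwd_orbit_lift_meets_open[where V = "{X. bottom_row_sq (adj2 k ** X) < inverse (real (Suc n))}"]
        open_Collect_less[OF continuous_on_bottom_row_sq_mult continuous_on_const]
      by blast
  qed
  then obtain \<gamma> \<tau> where \<gamma>: "\<And>n. \<gamma> n \<in> \<Gamma>" and \<tau>: "\<And>n. \<tau> n \<ge> 0"
    and close: "\<And>n. bottom_row_sq (adj2 k ** (\<gamma> n ** h ** geo_a (\<tau> n))) < inverse (real (Suc n))"
    by metis
  have k: "det k = 1" and "lam > 0"
    using frame unfolding cusp_frame_def closed_horocycle_data_def SL2_iff_det by auto
  define y where "y n = Im (mob (adj2 k ** (\<gamma> n ** h ** geo_a (\<tau> n))) \<i>)" for n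
  define K where "K n = k ** mat2 (sqrt (y n)) 0 0 (1 / sqrt (y n))" for n
  have det: "det (adj2 k ** (\<gamma> n ** h ** geo_a (\<tau> n))) = 1" for n
    using k h det_eq_1[OF \<gamma>] by (simp add: det_mul SL2_iff_det)
  have y: "real (Suc n) < y n" for n
    unfolding y_def Im_mob_i[OF det]
    using close[of n] bottom_row_sq_pos[OF det] by (simp add: field_simps)
  have y_pos: "0 < y n" for n
    using y[of n] of_nat_0_le_iff[of "Suc n"] by linarith
  have frames: "cusp_frame \<Gamma> (K n) (lam / y n)" for n
    using cusp_frame_rescale[OF frame real_sqrt_gt_zero[OF y_pos[of n]]] y_pos[of n]
    unfolding K_def by (simp add: less_imp_le)
  have "mob (\<gamma> n ** h ** geo_a (\<tau> n)) \<i> \<in> horocycle (K n)" for n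
    unfolding K_def using mob_i_mem_horocycle_rescaled[OF k _ y_def] k h det_eq_1[OF \<gamma>]
    by (simp add: det_mul SL2_iff_det)
  with frames horocycle_length_tendsto_0[OF frames y \<open>lam > 0\<close>] \<gamma> \<tau> show ?thesis
    unfolding cusp_frame_def by (intro exI[of _ K] exI[of _ \<tau>]) blast
qed

end

theorem mainTheorem13:
  fixes \<Gamma> :: "(real^2^2) set" and h :: "real^2^2"
  assumes "torsion_free_fuchsian \<Gamma>"
    and "\<not> elementary \<Gamma>"
    and "\<exists>p\<in>\<Gamma>. parabolic p"
    and "h \<in> SL2"
    and "closure (fwd_orbit_lift \<Gamma> h) = {x. nonwandering \<Gamma> x}"
  shows "cusp_recurrent \<Gamma> h"
proof -
  interpret torsion_free_fuchsian_group \<Gamma>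
    using assms(1) by unfold_locales
  obtain k lam where frame: "cusp_frame \<Gamma> k lam"
    using assms(3) exists_cusp_frame by blast
  then have "col1 k \<noteq> 0"
    unfolding cusp_frame_def closed_horocycle_data_def parabolic_fixed_point_def by blast
  then obtain g0 where g0: "g0 \<in> \<Gamma>" "\<not> fixes_bdry g0 (col1 k)"
    using not_elementary_imp_not_fixes_bdry assms(2) by blast
  have deep: "\<exists>h'. periodic_vector \<Gamma> h' \<and> h' \<in> closure (fwd_orbit_lift \<Gamma> h) \<and>
      bottom_row_sq (adj2 k ** h') < r" if "r > 0" for r
    using exists_periodic_vector_deep_in_cusp[OF frame g0 that] periodic_vector_imp_nonwandering assms(5)
    by blast
  show ?thesis
    unfolding cusp_recurrent_def
  proof
    show "\<not> parabolic_fixed_point \<Gamma> (col1 h)"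
      using deep not_parabolic_endpoint_if_periodic_in_orbit_closure assms(4) by (meson zero_less_one)
  qed (use exists_shrinking_horocycles_along_orbit[OF frame assms(4)] deep in blast)
qed

end
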